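(* Suppose a quantum algorithm $Q$ makes $T$ queries to a Boolean input $X\in\{0,1\}^N$. Then for all $\alpha,\delta>0$, one can approximate $Q$'s acceptance probability to within an additive error $\alpha$, on at least a $1-\delta$ fraction of inputs $X\in\{0,1\}^N$, by a deterministic classical algorithm making $\frac{2^{O(T)}}{\alpha^4\delta^4}$ queries to $X$ (with the constant in $O(T)$ absolute); moreover these classical queries are nonadaptive. *)

theory Defs
  imports Complex_Main
begin

(* The state space has orthonormal basis indexed by k < (N+1)*m, where
  k mod (N+1) is the query register (0 = no query, i+1 = query bit i of X)
  and k div (N+1) is the workspace register (m \<ge> 1 workspace states). *)

definition inputs :: "nat \<Rightarrow> (nat \<Rightarrow> bool) set" where
  "inputs N = {X. \<forall>i\<ge>N. \<not> X i}"

definition is_unitary :: "nat \<Rightarrow> (nat \<Rightarrow> nat \<Rightarrow> complex) \<Rightarrow> bool" where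
  "is_unitary D U \<longleftrightarrow>
     (\<forall>j<D. \<forall>l<D. (\<Sum>k<D. cnj (U k j) * U k l) = (if j = l then 1 else 0))"

definition mat_apply :: "nat \<Rightarrow> (nat \<Rightarrow> nat \<Rightarrow> complex) \<Rightarrow> (nat \<Rightarrow> complex) \<Rightarrow> (nat \<Rightarrow> complex)" where
  "mat_apply D U v = (\<lambda>j. \<Sum>k<D. U j k * v k)"

definition phase_query :: "nat \<Rightarrow> (nat \<Rightarrow> bool) \<Rightarrow> (nat \<Rightarrow> complex) \<Rightarrow> (nat \<Rightarrow> complex)" where
  "phase_query N X v = (\<lambda>k. (if k mod (N + 1) = 0 then 1
                        else if X (k mod (N + 1) - 1) then -1 else 1) * v k)"

primrec qstate :: "nat \<Rightarrow> nat \<Rightarrow> (nat \<Rightarrow> nat \<Rightarrow> nat \<Rightarrow> complex) \<Rightarrow> (nat \<Rightarrow> bool) \<Rightarrow> nat \<Rightarrow> (nat \<Rightarrow> complex)" where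
  "qstate N m U X 0 = mat_apply ((N + 1) * m) (U 0) (\<lambda>k. if k = 0 then 1 else 0)"
| "qstate N m U X (Suc t) = mat_apply ((N + 1) * m) (U (Suc t)) (phase_query N X (qstate N m U X t))"

definition acc_prob :: "nat \<Rightarrow> nat \<Rightarrow> (nat \<Rightarrow> nat \<Rightarrow> nat \<Rightarrow> complex) \<Rightarrow> nat set \<Rightarrow> nat \<Rightarrow> (nat \<Rightarrow> bool) \<Rightarrow> real" where
  "acc_prob N m U Acc T X = (\<Sum>k\<in>Acc. (cmod (qstate N m U X T k))\<^sup>2)"

definition quantum_query_alg :: "nat \<Rightarrow> nat \<Rightarrow> (nat \<Rightarrow> nat \<Rightarrow> nat \<Rightarrow> complex) \<Rightarrow> nat set \<Rightarrow> nat \<Rightarrow> bool" where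
  "quantum_query_alg N m U Acc T \<longleftrightarrow>
     0 < m \<and> (\<forall>t\<le>T. is_unitary ((N + 1) * m) (U t)) \<and> Acc \<subseteq> {..<(N + 1) * m}"

definition nonadaptive_alg :: "nat \<Rightarrow> nat set \<Rightarrow> ((nat \<Rightarrow> bool) \<Rightarrow> real) \<Rightarrow> bool" where
  "nonadaptive_alg N S g \<longleftrightarrow>
     S \<subseteq> {..<N} \<and> (\<forall>X Y. (\<forall>i\<in>S. X i = Y i) \<longrightarrow> g X = g Y)"

end

theory Submission
  imports Defs "HOL-Computational_Algebra.Polynomial" "HOL-Analysis.Convex"
begin

text \<open>The acceptance probability of a \<open>T\<close>-query algorithm is a real multilinear polynomial of
degree at most \<open>2T\<close> in the signs \<open>(-1)^x\<^sub>i\<close>, with values in \<open>[0,1]\<close>. For a polynomial \<open>f\<close>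
of degree \<open>d\<close> bounded by 1, the pointwise total influence \<open>\<Sum>\<^sub>i |D\<^sub>i f(X)|\<close> is at most
\<open>2d\<cdot>6\<^sup>d\<close>: apply the noise operator \<open>T\<^sub>t\<close> only to the coordinates where \<open>D\<^sub>i f(X)\<close> has a
fixed sign; then \<open>t \<mapsto> T\<^sub>t f(X)\<close> is a polynomial of degree \<open>d\<close> bounded by 1 on \<open>[0,1]\<close>,
whose derivative at \<open>t = 1\<close> is that one-signed half of the sum, and a Markov-type inequality
bounds it. Bonami's hypercontractive inequality, applied to \<open>D\<^sub>i f\<close>, bounds the \<open>L\<^sub>2\<close> norm of
each derivative by its \<open>L\<^sub>1\<close> norm, the influence. By Efron--Stein, averaging \<open>f\<close> over all
coordinates of small influence then moves it little in \<open>L\<^sub>2\<close>, so querying only the few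
influential coordinates suffices, and Chebyshev's inequality turns the \<open>L\<^sub>2\<close> error into the
fraction of good inputs.\<close>

section \<open>A Markov-type inequality for polynomials on the unit interval\<close>

definition grid_point :: "nat \<Rightarrow> nat \<Rightarrow> real" where
  "grid_point d m = real m / real d"

definition lagrange_numer :: "nat \<Rightarrow> nat \<Rightarrow> real poly" where
  "lagrange_numer d m = (\<Prod>l\<in>{0..d}-{m}. [:- grid_point d l, 1:])"

definition lagrange_denom :: "nat \<Rightarrow> nat \<Rightarrow> real" where
  "lagrange_denom d m = (\<Prod>l\<in>{0..d}-{m}. (grid_point d m - grid_point d l))"

lemma grid_point_eq_iff: "0 < d \<Longrightarrow> grid_point d a = grid_point d b \<longleftrightarrow> a = b"
  by (auto simp: grid_point_def divide_simps)

lemma poly_lagrange_numer: "poly (lagrange_numer d m) x = (\<Prod>l\<in>{0..d}-{m}. (x - grid_point d l))"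
  by (simp add: lagrange_numer_def poly_prod)

lemma lagrange_denom_nonzero: "0 < d \<Longrightarrow> lagrange_denom d m \<noteq> 0"
  by (auto simp: lagrange_denom_def grid_point_eq_iff)

lemma degree_lagrange_numer_le: "m \<le> d \<Longrightarrow> degree (lagrange_numer d m) \<le> d"
proof -
  assume "m \<le> d"
  have "degree (lagrange_numer d m) \<le> sum (degree \<circ> (\<lambda>l. [:- grid_point d l, 1:])) ({0..d}-{m})"
    unfolding lagrange_numer_def by (rule degree_prod_sum_le) auto
  also have "\<dots> \<le> d" using \<open>m \<le> d\<close> by auto
  finally show ?thesis .
qed

lemma lagrange_interpolation_grid:
  fixes P :: "real poly"
  assumes d: "0 < d" and deg: "degree P \<le> d"
  shows "P = (\<Sum>m\<in>{0..d}. smult (poly P (grid_point d m) / lagrange_denom d m) (lagrange_numer d m))"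
    (is "P = ?Q")
proof (rule ccontr)
  assume ne: "P \<noteq> ?Q"
  have "degree ?Q \<le> d"
    by (intro degree_sum_le) (auto intro: order.trans[OF degree_smult_le] degree_lagrange_numer_le)
  then have deg_diff: "degree (P - ?Q) \<le> d" using deg degree_diff_le by blast
  have "poly ?Q (grid_point d j) = poly P (grid_point d j)" if j: "j \<in> {0..d}" for j
  proof -
    have "poly (lagrange_numer d m) (grid_point d j) = 0" if "m \<in> {0..d}" "m \<noteq> j" for m
      unfolding poly_lagrange_numer using j that by (intro prod_zero) auto
    then have "poly ?Q (grid_point d j) =
        (\<Sum>m\<in>{0..d}. if m = j then poly P (grid_point d j) else 0)"
      unfolding poly_sum using lagrange_denom_nonzero[OF d, of j]
      by (intro sum.cong) (auto simp: poly_lagrange_numer lagrange_denom_def)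
    then show ?thesis using j by simp
  qed
  then have "grid_point d ` {0..d} \<subseteq> {x. poly (P - ?Q) x = 0}" by auto
  then have "card (grid_point d ` {0..d}) \<le> card {x. poly (P - ?Q) x = 0}"
    using ne by (intro card_mono poly_roots_finite) auto
  also have "\<dots> \<le> degree (P - ?Q)" using ne by (intro card_poly_roots_bound) auto
  also have "card (grid_point d ` {0..d}) = d + 1"
    by (subst card_image) (auto simp: inj_on_def grid_point_eq_iff[OF d])
  finally show False using deg_diff by simp
qed

lemma abs_poly_pderiv_lagrange_numer_1_le:
  assumes d: "0 < d" and md: "m \<le> d"
  shows "\<bar>poly (pderiv (lagrange_numer d m)) 1\<bar> \<le> real d"
proof -
  have factor_bounds: "0 \<le> 1 - grid_point d l \<and> 1 - grid_point d l \<le> 1" if "l \<in> {0..d}" for l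
    using d that by (auto simp: grid_point_def divide_simps)
  have "poly (pderiv (lagrange_numer d m)) 1 =
      (\<Sum>a\<in>{0..d}-{m}. (\<Prod>l\<in>{0..d}-{m}-{a}. (1 - grid_point d l)))"
    unfolding lagrange_numer_def pderiv_prod by (simp add: poly_sum poly_prod pderiv_pCons)
  also have "\<bar>\<dots>\<bar> \<le> (\<Sum>a\<in>{0..d}-{m}. 1)"
  proof (intro order.trans[OF sum_abs] sum_mono)
    fix a
    have "0 \<le> (\<Prod>l\<in>{0..d}-{m}-{a}. (1 - grid_point d l))"
      using factor_bounds by (intro prod_nonneg) auto
    moreover have "(\<Prod>l\<in>{0..d}-{m}-{a}. (1 - grid_point d l)) \<le> 1"
      using factor_bounds by (intro prod_le_1) auto
    ultimately show "\<bar>\<Prod>l\<in>{0..d}-{m}-{a}. (1 - grid_point d l)\<bar> \<le> 1" by simp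
  qed
  also have "\<dots> \<le> real d" using md by auto
  finally show ?thesis .
qed

lemma prod_lessThan_diff_eq_fact: "(\<Prod>l<m. (real m - real l)) = fact m"
proof (induction m)
  case (Suc m)
  have "(\<Prod>l<Suc m. (real (Suc m) - real l)) = real (Suc m) * (\<Prod>l<m. (real m - real l))"
    by (subst prod.lessThan_Suc_shift) simp
  then show ?case using Suc by (simp add: fact_Suc)
qed simp

lemma prod_atLeastAtMost_diff_eq_fact: "(\<Prod>l\<in>{Suc m..m+k}. (real l - real m)) = fact k"
proof (induction k)
  case (Suc k)
  have "{Suc m..m + Suc k} = insert (m + Suc k) {Suc m..m+k}" by auto
  then show ?case using Suc by (simp add: fact_Suc)
qed simp

lemma abs_lagrange_denom:
  assumes d: "0 < d" and m: "m \<le> d"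
  shows "\<bar>lagrange_denom d m\<bar> = fact m * fact (d - m) / real d ^ d"
proof -
  have split: "{0..d}-{m} = {..<m} \<union> {Suc m..m + (d-m)}" using m by auto
  have "\<bar>lagrange_denom d m\<bar> = (\<Prod>l\<in>{0..d}-{m}. \<bar>real m - real l\<bar> / real d)"
    unfolding lagrange_denom_def grid_point_def abs_prod
    by (intro prod.cong) (auto simp: diff_divide_distrib[symmetric])
  also have "\<dots> = (\<Prod>l\<in>{0..d}-{m}. \<bar>real m - real l\<bar>) / real d ^ d"
    using m by (simp add: prod_dividef)
  also have "(\<Prod>l\<in>{0..d}-{m}. \<bar>real m - real l\<bar>) =
     (\<Prod>l<m. (real m - real l)) * (\<Prod>l\<in>{Suc m..m+(d-m)}. (real l - real m))"
    unfolding split by (subst prod.union_disjoint) (auto intro!: arg_cong2[where f = "(*)"] prod.cong)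
  finally show ?thesis by (simp add: prod_lessThan_diff_eq_fact prod_atLeastAtMost_diff_eq_fact)
qed

lemma power_self_le_3_power_fact: "real d ^ d \<le> 3 ^ d * fact d"
proof (induction d)
  case (Suc d)
  show ?case
  proof (cases "d = 0")
    case False
    have "(1 + 1 / real d) ^ d \<le> exp 1" using False by (intro exp_ge_one_plus_x_over_n_power_n) auto
    also have "exp (1::real) \<le> 3" using exp_le by simp
    finally have e: "(1 + 1 / real d) ^ d \<le> 3" .
    have "real (Suc d) ^ d = real d ^ d * (1 + 1 / real d) ^ d"
      using False by (simp add: power_mult_distrib[symmetric] field_simps)
    also have "\<dots> \<le> (3 ^ d * fact d) * 3"
      using Suc e by (intro mult_mono) auto
    finally have "real (Suc d) ^ Suc d \<le> real (Suc d) * ((3 ^ d * fact d) * 3)"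
      by (simp del: of_nat_Suc)
    then show ?thesis by (simp add: fact_Suc algebra_simps)
  qed simp
qed simp

text \<open>A crude form of Markov's inequality, obtained from Lagrange interpolation at the \<open>d+1\<close>
equally spaced points of \<open>[0,1]\<close>.\<close>

lemma abs_poly_pderiv_1_le:
  fixes P :: "real poly"
  assumes deg: "degree P \<le> d" and bnd: "\<And>t. 0 \<le> t \<Longrightarrow> t \<le> 1 \<Longrightarrow> \<bar>poly P t\<bar> \<le> M"
  shows "\<bar>poly (pderiv P) 1\<bar> \<le> M * real d * 6 ^ d"
proof (cases "d = 0")
  case True
  then have "pderiv P = 0" using deg by (simp add: pderiv_eq_0_iff)
  then show ?thesis using True by simp
next
  case False
  then have d: "0 < d" by simp
  have M0: "0 \<le> M" using bnd[of 0] by simp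
  have "poly (pderiv P) 1 = (\<Sum>m\<in>{0..d}.
      poly P (grid_point d m) / lagrange_denom d m * poly (pderiv (lagrange_numer d m)) 1)"
    by (subst lagrange_interpolation_grid[OF d deg])
      (simp add: higher_pderiv_sum[of 1, simplified] pderiv_smult poly_sum)
  also have "\<bar>\<dots>\<bar> \<le> (\<Sum>m\<in>{0..d}. M * (real d ^ d / (fact m * fact (d - m))) * real d)"
  proof (intro order.trans[OF sum_abs] sum_mono)
    fix m assume m: "m \<in> {0..d}"
    have "\<bar>poly P (grid_point d m)\<bar> \<le> M"
      using m d by (intro bnd) (auto simp: grid_point_def divide_simps)
    then have "\<bar>poly P (grid_point d m)\<bar> * (real d ^ d / (fact m * fact (d - m)))
        \<le> M * (real d ^ d / (fact m * fact (d - m)))"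
      by (intro mult_right_mono) auto
    then have "\<bar>poly P (grid_point d m) / lagrange_denom d m\<bar> \<le> M * (real d ^ d / (fact m * fact (d - m)))"
      using abs_lagrange_denom[OF d] m by (simp add: abs_divide)
    then show "\<bar>poly P (grid_point d m) / lagrange_denom d m * poly (pderiv (lagrange_numer d m)) 1\<bar>
        \<le> M * (real d ^ d / (fact m * fact (d - m))) * real d"
      unfolding abs_mult using abs_poly_pderiv_lagrange_numer_1_le[OF d, of m] M0 m
      by (intro mult_mono) auto
  qed
  also have "\<dots> = M * real d * (real d ^ d / fact d) * (\<Sum>m\<in>{0..d}. real (d choose m))"
    by (simp add: sum_distrib_left binomial_fact field_simps)
  also have "(\<Sum>m\<in>{0..d}. real (d choose m)) = 2 ^ d"
    using choose_row_sum[of d] by (simp add: atMost_atLeast0 flip: of_nat_sum)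
  also have "M * real d * (real d ^ d / fact d) * 2 ^ d \<le> M * real d * 3 ^ d * 2 ^ d"
    using power_self_le_3_power_fact[of d] M0
    by (intro mult_right_mono mult_left_mono) (auto simp: divide_simps)
  also have "\<dots> = M * real d * 6 ^ d" by (simp add: power_mult_distrib[symmetric])
  finally show ?thesis .
qed

section \<open>Multilinear polynomials of bounded degree on the Boolean cube\<close>

definition bit_sign :: "bool \<Rightarrow> 'a::comm_ring_1" where
  "bit_sign b = (if b then -1 else 1)"

lemma bit_sign_simps [simp]: "bit_sign True = -1" "bit_sign False = 1"
  by (simp_all add: bit_sign_def)

lemma bit_sign_mult_self [simp]: "bit_sign b * bit_sign b = 1"
  by (simp add: bit_sign_def)

text \<open>\<open>low_degree n k g\<close>: \<open>g\<close> is a multilinear polynomial of degree at most \<open>k\<close> in the signs of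
the bits \<open>X 0, \<dots>, X (n - 1)\<close>, split along the last variable. The degree is an integer so that
the bound \<open>k - 1\<close> on the coefficient of a degree-0 polynomial forces that coefficient to vanish.\<close>

fun low_degree :: "nat \<Rightarrow> int \<Rightarrow> ((nat \<Rightarrow> bool) \<Rightarrow> 'a::comm_ring_1) \<Rightarrow> bool" where
  "low_degree 0 k g \<longleftrightarrow> (\<exists>c. g = (\<lambda>_. c) \<and> (k < 0 \<longrightarrow> c = 0))"
| "low_degree (Suc n) k g \<longleftrightarrow> (\<exists>h0 h1. low_degree n k h0 \<and> low_degree n (k - 1) h1 \<and>
      g = (\<lambda>X. h0 X + bit_sign (X n) * h1 X))"

lemma low_degree_SucI:
  "low_degree n k h0 \<Longrightarrow> low_degree n (k - 1) h1 \<Longrightarrow> g = (\<lambda>X. h0 X + bit_sign (X n) * h1 X) \<Longrightarrow>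
    low_degree (Suc n) k g"
  by auto

lemma low_degree_SucE:
  assumes "low_degree (Suc n) k g"
  obtains h0 h1 where "low_degree n k h0" "low_degree n (k - 1) h1"
    "g = (\<lambda>X. h0 X + bit_sign (X n) * h1 X)"
  using assms by auto

lemma low_degree_zero: "low_degree n k (\<lambda>_. 0)"
proof (induction n arbitrary: k)
  case (Suc n)
  show ?case by (rule low_degree_SucI[of n k "\<lambda>_. 0" "\<lambda>_. 0"]) (auto intro: Suc)
qed auto

lemma low_degree_const: "0 \<le> k \<Longrightarrow> low_degree n k (\<lambda>_. c)"
proof (induction n arbitrary: k)
  case (Suc n)
  then show ?case by (intro low_degree_SucI[of n k "\<lambda>_. c" "\<lambda>_. 0"]) (auto intro: low_degree_zero)
qed auto

lemma low_degree_negative: "low_degree n k g \<Longrightarrow> k < 0 \<Longrightarrow> g = (\<lambda>_. 0)"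
proof (induction n arbitrary: k g)
  case (Suc n)
  then obtain h0 h1 where "low_degree n k h0" "low_degree n (k - 1) h1"
    "g = (\<lambda>X. h0 X + bit_sign (X n) * h1 X)" by (auto elim: low_degree_SucE)
  with Suc.IH[of k h0] Suc.IH[of "k - 1" h1] Suc.prems show ?case by auto
qed auto

lemma low_degree_mono: "low_degree n k g \<Longrightarrow> k \<le> k' \<Longrightarrow> low_degree n k' g"
proof (induction n arbitrary: k k' g)
  case (Suc n)
  then obtain h0 h1 where "low_degree n k h0" "low_degree n (k - 1) h1"
    "g = (\<lambda>X. h0 X + bit_sign (X n) * h1 X)" by (auto elim: low_degree_SucE)
  with Suc.IH[of k h0 k'] Suc.IH[of "k - 1" h1 "k' - 1"] Suc.prems show ?case by auto
qed auto

lemma low_degree_add: "low_degree n k f \<Longrightarrow> low_degree n k g \<Longrightarrow> low_degree n k (\<lambda>X. f X + g X)"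
proof (induction n arbitrary: k f g)
  case (Suc n)
  obtain h0 h1 where h: "low_degree n k h0" "low_degree n (k - 1) h1"
    "f = (\<lambda>X. h0 X + bit_sign (X n) * h1 X)"
    using Suc.prems(1) by (rule low_degree_SucE)
  obtain e0 e1 where e: "low_degree n k e0" "low_degree n (k - 1) e1"
    "g = (\<lambda>X. e0 X + bit_sign (X n) * e1 X)"
    using Suc.prems(2) by (rule low_degree_SucE)
  show ?case
    by (rule low_degree_SucI[of n k "\<lambda>X. h0 X + e0 X" "\<lambda>X. h1 X + e1 X"])
      (auto intro!: Suc.IH h e simp: h(3) e(3) algebra_simps)
qed auto

lemma low_degree_cmult: "low_degree n k f \<Longrightarrow> low_degree n k (\<lambda>X. c * f X)"
proof (induction n arbitrary: k f)
  case (Suc n)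
  obtain h0 h1 where h: "low_degree n k h0" "low_degree n (k - 1) h1"
    "f = (\<lambda>X. h0 X + bit_sign (X n) * h1 X)"
    using Suc.prems by (rule low_degree_SucE)
  show ?case
    by (rule low_degree_SucI[of n k "\<lambda>X. c * h0 X" "\<lambda>X. c * h1 X"])
      (auto intro!: Suc.IH h simp: h(3) algebra_simps)
qed auto

lemma low_degree_diff: "low_degree n k f \<Longrightarrow> low_degree n k g \<Longrightarrow> low_degree n k (\<lambda>X. f X - g X)"
  using low_degree_add[of n k f "\<lambda>X. - 1 * g X"] low_degree_cmult[of n k g "- 1"] by simp

lemma low_degree_sum:
  "finite A \<Longrightarrow> (\<And>a. a \<in> A \<Longrightarrow> low_degree n k (f a)) \<Longrightarrow> low_degree n k (\<lambda>X. \<Sum>a\<in>A. f a X)"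
  by (induction A rule: finite_induct) (simp_all add: low_degree_zero low_degree_add)

lemma low_degree_mult:
  "low_degree n k f \<Longrightarrow> low_degree n l g \<Longrightarrow> low_degree n (k + l) (\<lambda>X. f X * g X)"
proof (induction n arbitrary: k l f g)
  case (Suc n)
  obtain h0 h1 where h: "low_degree n k h0" "low_degree n (k - 1) h1"
    "f = (\<lambda>X. h0 X + bit_sign (X n) * h1 X)"
    using Suc.prems(1) by (rule low_degree_SucE)
  obtain e0 e1 where e: "low_degree n l e0" "low_degree n (l - 1) e1"
    "g = (\<lambda>X. e0 X + bit_sign (X n) * e1 X)"
    using Suc.prems(2) by (rule low_degree_SucE)
  have even_part: "low_degree n (k + l) (\<lambda>X. h0 X * e0 X + h1 X * e1 X)"
    by (intro low_degree_add Suc.IH h e low_degree_mono[OF Suc.IH[OF h(2) e(2)]]) simp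
  have odd_part: "low_degree n (k + l - 1) (\<lambda>X. h0 X * e1 X + h1 X * e0 X)"
    using Suc.IH[OF h(1) e(2)] Suc.IH[OF h(2) e(1)] by (intro low_degree_add) (simp_all add: algebra_simps)
  have "f X * g X = (h0 X * e0 X + h1 X * e1 X) + bit_sign (X n) * (h0 X * e1 X + h1 X * e0 X)" for X
    using bit_sign_mult_self[of "X n", where 'a = 'a] unfolding h(3) e(3)
    by (simp add: algebra_simps)
  then show ?case by (intro low_degree_SucI[OF even_part odd_part]) auto
qed auto

lemma low_degree_cong:
  "low_degree n k g \<Longrightarrow> (\<And>j. j < n \<Longrightarrow> X j = Y j) \<Longrightarrow> g X = g Y"
proof (induction n arbitrary: k g)
  case (Suc n)
  then obtain h0 h1 where "low_degree n k h0" "low_degree n (k - 1) h1"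
    "g = (\<lambda>X. h0 X + bit_sign (X n) * h1 X)" by (auto elim: low_degree_SucE)
  with Suc.IH[of k h0] Suc.IH[of "k - 1" h1] Suc.prems show ?case by auto
qed auto

lemma low_degree_fun_upd_beyond: "low_degree n k g \<Longrightarrow> n \<le> j \<Longrightarrow> g (X(j := b)) = g X"
  by (erule low_degree_cong) auto

lemma low_degree_bit_sign: "i < n \<Longrightarrow> low_degree n 1 (\<lambda>X. bit_sign (X i) :: 'a::comm_ring_1)"
proof (induction n)
  case (Suc n)
  show ?case
  proof (cases "i = n")
    case True
    then show ?thesis
      by (intro low_degree_SucI[of n 1 "\<lambda>_. 0" "\<lambda>_. 1"]) (auto intro: low_degree_zero low_degree_const)
  next
    case False
    then show ?thesis using Suc
      by (intro low_degree_SucI[of n 1 "\<lambda>X. bit_sign (X i)" "\<lambda>_. 0"]) (auto intro: low_degree_zero)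
  qed
qed simp

lemma low_degree_fun_upd: "low_degree n k g \<Longrightarrow> low_degree n k (\<lambda>X. g (X(i := b)))"
proof (induction n arbitrary: k g)
  case (Suc n)
  obtain h0 h1 where h: "low_degree n k h0" "low_degree n (k - 1) h1"
    "g = (\<lambda>X. h0 X + bit_sign (X n) * h1 X)"
    using Suc.prems by (rule low_degree_SucE)
  show ?case
  proof (cases "i = n")
    case True
    have "low_degree n k (\<lambda>X. h0 X + bit_sign b * h1 X)"
      by (intro low_degree_add h(1) low_degree_cmult low_degree_mono[OF h(2)]) simp
    moreover have "(\<lambda>X. g (X(i := b))) = (\<lambda>X. (h0 X + bit_sign b * h1 X) + bit_sign (X n) * 0)"
      using h True low_degree_fun_upd_beyond[OF h(1), of n] low_degree_fun_upd_beyond[OF h(2), of n]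
      by auto
    ultimately show ?thesis by (rule low_degree_SucI[OF _ low_degree_zero])
  next
    case False
    then show ?thesis using h Suc.IH[OF h(1)] Suc.IH[OF h(2)] by (intro low_degree_SucI) auto
  qed
qed auto

lemma low_degree_Re:
  "low_degree n k (g :: (nat \<Rightarrow> bool) \<Rightarrow> complex) \<Longrightarrow> low_degree n k (\<lambda>X. Re (g X))"
proof (induction n arbitrary: k g)
  case (Suc n)
  obtain h0 h1 where h: "low_degree n k h0" "low_degree n (k - 1) h1"
    "g = (\<lambda>X. h0 X + bit_sign (X n) * h1 X)"
    using Suc.prems by (rule low_degree_SucE)
  have "(\<lambda>X. Re (g X)) = (\<lambda>X. Re (h0 X) + bit_sign (X n) * Re (h1 X))"
    using h(3) by (auto simp: bit_sign_def)
  then show ?case using Suc.IH[OF h(1)] Suc.IH[OF h(2)] by (auto intro: low_degree_SucI)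
qed auto

lemma low_degree_cnj:
  "low_degree n k (g :: (nat \<Rightarrow> bool) \<Rightarrow> complex) \<Longrightarrow> low_degree n k (\<lambda>X. cnj (g X))"
proof (induction n arbitrary: k g)
  case (Suc n)
  obtain h0 h1 where h: "low_degree n k h0" "low_degree n (k - 1) h1"
    "g = (\<lambda>X. h0 X + bit_sign (X n) * h1 X)"
    using Suc.prems by (rule low_degree_SucE)
  have "(\<lambda>X. cnj (g X)) = (\<lambda>X. cnj (h0 X) + bit_sign (X n) * cnj (h1 X))"
    using h(3) by (auto simp: bit_sign_def)
  then show ?case using Suc.IH[OF h(1)] Suc.IH[OF h(2)] by (auto intro: low_degree_SucI)
qed auto

section \<open>Bonami's hypercontractive inequality\<close>

lemma inputs_0: "inputs 0 = {\<lambda>_. False}"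
  by (auto simp: inputs_def)

lemma inputs_beyond: "X \<in> inputs n \<Longrightarrow> n \<le> i \<Longrightarrow> \<not> X i"
  by (simp add: inputs_def)

lemma inputs_Suc: "inputs (Suc n) = inputs n \<union> (\<lambda>X. X(n := True)) ` inputs n"
proof
  show "inputs (Suc n) \<subseteq> inputs n \<union> (\<lambda>X. X(n := True)) ` inputs n"
  proof
    fix X assume X: "X \<in> inputs (Suc n)"
    then have X': "X(n := False) \<in> inputs n"
      by (auto simp: inputs_def Suc_le_eq dest: le_neq_implies_less)
    show "X \<in> inputs n \<union> (\<lambda>X. X(n := True)) ` inputs n"
    proof (cases "X n")
      case True
      then have "X = (X(n := False))(n := True)" by (intro ext) simp
      then show ?thesis using X' by blast
    next
      case False
      then show ?thesis using X' by (simp add: fun_upd_idem)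
    qed
  qed
  show "inputs n \<union> (\<lambda>X. X(n := True)) ` inputs n \<subseteq> inputs (Suc n)"
    unfolding inputs_def by auto
qed

lemma finite_inputs: "finite (inputs n)"
  by (induction n) (simp_all add: inputs_0 inputs_Suc)

lemma sum_inputs_Suc:
  "(\<Sum>X\<in>inputs (Suc n). \<phi> X) = (\<Sum>X\<in>inputs n. \<phi> X + \<phi> (X(n := True)))"
proof -
  have disjoint: "inputs n \<inter> (\<lambda>X. X(n := True)) ` inputs n = {}"
    using inputs_beyond by fastforce
  have "inj_on (\<lambda>X. X(n := True)) (inputs n)"
  proof (rule inj_onI, rule ext)
    fix X Y i assume XY: "X \<in> inputs n" "Y \<in> inputs n" and eq: "X(n := True) = Y(n := True)"
    show "X i = Y i"
      using fun_cong[OF eq, of i] inputs_beyond[OF XY(1), of n] inputs_beyond[OF XY(2), of n]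
      by (cases "i = n") auto
  qed
  then have "(\<Sum>X\<in>(\<lambda>X. X(n := True)) ` inputs n. \<phi> X) = (\<Sum>X\<in>inputs n. \<phi> (X(n := True)))"
    by (rule sum.reindex_cong) auto
  moreover have "(\<Sum>X\<in>inputs (Suc n). \<phi> X) =
      (\<Sum>X\<in>inputs n. \<phi> X) + (\<Sum>X\<in>(\<lambda>X. X(n := True)) ` inputs n. \<phi> X)"
    unfolding inputs_Suc by (rule sum.union_disjoint) (auto simp: finite_inputs disjoint)
  ultimately show ?thesis by (simp add: sum.distrib)
qed

lemma card_inputs: "card (inputs n) = 2 ^ n"
proof (induction n)
  case (Suc n)
  have "card (inputs (Suc n)) = (\<Sum>X\<in>inputs (Suc n). 1)" by simp
  also have "\<dots> = 2 * 2 ^ n" using Suc by (subst sum_inputs_Suc) simp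
  finally show ?case by simp
qed (simp add: inputs_0)

lemma bonami_induction_step:
  fixes M A B P Q R c :: real
  assumes nonneg: "0 \<le> A" "0 \<le> B" "0 \<le> P" "0 \<le> Q" "0 \<le> R" "1 \<le> M" "0 < c"
    and IH0: "c * P \<le> M * A\<^sup>2" and IH1: "c * Q \<le> M / 9 * B\<^sup>2" and CS: "R\<^sup>2 \<le> P * Q"
  shows "c * (P + 6 * R + Q) \<le> M * (A + B)\<^sup>2"
proof -
  have "(c * R)\<^sup>2 = c\<^sup>2 * R\<^sup>2" by (rule power_mult_distrib)
  also have "\<dots> \<le> c\<^sup>2 * (P * Q)" using CS by (intro mult_left_mono) auto
  also have "\<dots> = (c * P) * (c * Q)" by (simp add: power2_eq_square mult_ac)
  also have "\<dots> \<le> (M * A\<^sup>2) * (M / 9 * B\<^sup>2)"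
    by (rule mult_mono) (use IH0 IH1 nonneg in auto)
  also have "\<dots> = (M * A * B / 3)\<^sup>2" by (simp add: power2_eq_square)
  finally have "c * R \<le> M * A * B / 3"
    by (rule power2_le_imp_le) (use nonneg in simp)
  moreover have "M / 9 * B\<^sup>2 \<le> M * B\<^sup>2" using nonneg by (intro mult_right_mono) auto
  moreover have "M * (A + B)\<^sup>2 = M * A\<^sup>2 + 2 * (M * A * B) + M * B\<^sup>2"
    by (simp add: power2_eq_square distrib_left distrib_right mult_ac)
  moreover have "c * (P + 6 * R + Q) = c * P + 6 * (c * R) + c * Q"
    by (simp add: distrib_left)
  ultimately show ?thesis using IH0 IH1 by linarith
qed

theorem bonami:
  fixes g :: "(nat \<Rightarrow> bool) \<Rightarrow> real"
  assumes "low_degree n k g"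
  shows "2 ^ n * (\<Sum>X\<in>inputs n. (g X) ^ 4) \<le> 9 ^ (nat k) * (\<Sum>X\<in>inputs n. (g X)\<^sup>2)\<^sup>2"
  using assms
proof (induction n arbitrary: k g)
  case 0
  then obtain c where "g = (\<lambda>_. c)" by auto
  moreover have "c ^ 4 \<le> 9 ^ nat k * (c\<^sup>2)\<^sup>2"
    using mult_right_mono[of 1 "9 ^ nat k" "(c\<^sup>2)\<^sup>2"] by (simp flip: power_mult)
  ultimately show ?case by (simp add: inputs_0)
next
  case (Suc n)
  obtain h0 h1 where h: "low_degree n k h0" "low_degree n (k - 1) h1"
    "g = (\<lambda>X. h0 X + bit_sign (X n) * h1 X)"
    using Suc.prems by (rule low_degree_SucE)
  define M :: real where "M = 9 ^ nat k"
  define A where "A = (\<Sum>X\<in>inputs n. (h0 X)\<^sup>2)"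
  define B where "B = (\<Sum>X\<in>inputs n. (h1 X)\<^sup>2)"
  define P where "P = (\<Sum>X\<in>inputs n. (h0 X) ^ 4)"
  define Q where "Q = (\<Sum>X\<in>inputs n. (h1 X) ^ 4)"
  define R where "R = (\<Sum>X\<in>inputs n. (h0 X)\<^sup>2 * (h1 X)\<^sup>2)"
  have g_split: "g X = h0 X + h1 X" "g (X(n := True)) = h0 X - h1 X" if "X \<in> inputs n" for X
    using inputs_beyond[OF that, of n]
    by (simp_all add: h(3) low_degree_fun_upd_beyond[OF h(1)] low_degree_fun_upd_beyond[OF h(2)])
  have p4: "(a + b) ^ 4 + (a - b) ^ 4 = 2 * a ^ 4 + 12 * (a\<^sup>2 * b\<^sup>2) + 2 * b ^ 4" for a b :: real
    by (simp add: power4_eq_xxxx power2_eq_square algebra_simps)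
  have p2: "(a + b)\<^sup>2 + (a - b)\<^sup>2 = 2 * a\<^sup>2 + 2 * b\<^sup>2" for a b :: real
    by (simp add: power2_eq_square algebra_simps)
  have "(\<Sum>X\<in>inputs (Suc n). (g X) ^ 4) =
      (\<Sum>X\<in>inputs n. 2 * (h0 X) ^ 4 + 12 * ((h0 X)\<^sup>2 * (h1 X)\<^sup>2) + 2 * (h1 X) ^ 4)"
    unfolding sum_inputs_Suc by (rule sum.cong[OF refl]) (simp only: g_split p4)
  also have "\<dots> = 2 * P + 12 * R + 2 * Q"
    unfolding P_def Q_def R_def by (simp add: sum.distrib sum_distrib_left)
  finally have sum4: "(\<Sum>X\<in>inputs (Suc n). (g X) ^ 4) = 2 * P + 12 * R + 2 * Q" .
  have "(\<Sum>X\<in>inputs (Suc n). (g X)\<^sup>2) = (\<Sum>X\<in>inputs n. 2 * (h0 X)\<^sup>2 + 2 * (h1 X)\<^sup>2)"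
    unfolding sum_inputs_Suc by (rule sum.cong[OF refl]) (simp only: g_split p2)
  also have "\<dots> = 2 * A + 2 * B"
    unfolding A_def B_def by (simp add: sum.distrib sum_distrib_left)
  finally have sum2: "(\<Sum>X\<in>inputs (Suc n). (g X)\<^sup>2) = 2 * A + 2 * B" .
  have key: "2 ^ n * (P + 6 * R + Q) \<le> M * (A + B)\<^sup>2"
  proof (cases "k \<le> 0")
    case True
    then have "h1 = (\<lambda>_. 0)" using low_degree_negative[OF h(2)] by simp
    then show ?thesis using Suc.IH[OF h(1)] by (simp add: P_def A_def B_def Q_def R_def M_def)
  next
    case False
    then have "nat k = Suc (nat (k - 1))" by simp
    then have "9 ^ nat (k - 1) = M / 9" unfolding M_def by simp
    then have "2 ^ n * Q \<le> M / 9 * B\<^sup>2" using Suc.IH[OF h(2)] by (simp only: Q_def B_def)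
    moreover have "R\<^sup>2 \<le> P * Q"
      using Cauchy_Schwarz_ineq_sum[of "\<lambda>X. (h0 X)\<^sup>2" "\<lambda>X. (h1 X)\<^sup>2" "inputs n"]
      unfolding R_def P_def Q_def by (simp add: power4_eq_xxxx power2_eq_square mult.assoc)
    ultimately show ?thesis
      using Suc.IH[OF h(1)]
      by (intro bonami_induction_step) (simp_all add: A_def B_def R_def M_def P_def Q_def sum_nonneg zero_le_even_power)
  qed
  have lhs: "(2::real) ^ Suc n * (2 * P + 12 * R + 2 * Q) = 4 * (2 ^ n * (P + 6 * R + Q))"
    by (simp add: algebra_simps)
  have rhs: "M * (2 * A + 2 * B)\<^sup>2 = 4 * (M * (A + B)\<^sup>2)"
    by (simp add: power2_eq_square algebra_simps)
  show ?case unfolding sum4 sum2 M_def[symmetric] lhs rhs using key by simp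
qed

section \<open>A pointwise bound on the total influence\<close>

definition flip :: "nat \<Rightarrow> (nat \<Rightarrow> bool) \<Rightarrow> (nat \<Rightarrow> bool)" where
  "flip i X = X(i := \<not> X i)"

lemma flip_flip [simp]: "flip i (flip i X) = X"
  by (rule ext) (simp add: flip_def)

lemma flip_commute: "flip i (flip j X) = flip j (flip i X)"
  by (rule ext) (simp add: flip_def)

lemma flip_apply_other [simp]: "i \<noteq> j \<Longrightarrow> flip i X j = X j"
  by (simp add: flip_def)

lemma flip_apply_same [simp]: "flip i X i = (\<not> X i)"
  by (simp add: flip_def)

lemma low_degree_flip_beyond: "low_degree n k h \<Longrightarrow> n \<le> j \<Longrightarrow> h (flip j X) = h X"
  unfolding flip_def by (rule low_degree_fun_upd_beyond)

primrec noise_op :: "nat set \<Rightarrow> real \<Rightarrow> nat \<Rightarrow> ((nat \<Rightarrow> bool) \<Rightarrow> real) \<Rightarrow> (nat \<Rightarrow> bool) \<Rightarrow> real" where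
  "noise_op B t 0 f = f"
| "noise_op B t (Suc n) f =
    (if n \<in> B then (\<lambda>X. (1 + t) / 2 * noise_op B t n f X + (1 - t) / 2 * noise_op B t n f (flip n X))
     else noise_op B t n f)"

lemma abs_noise_op_le:
  assumes "\<And>Y. \<bar>f Y\<bar> \<le> M" "0 \<le> t" "t \<le> 1"
  shows "\<bar>noise_op B t n f X\<bar> \<le> M"
proof (induction n arbitrary: X)
  case (Suc n)
  have "\<bar>(1 + t) / 2 * noise_op B t n f X + (1 - t) / 2 * noise_op B t n f (flip n X)\<bar>
      \<le> (1 + t) / 2 * \<bar>noise_op B t n f X\<bar> + (1 - t) / 2 * \<bar>noise_op B t n f (flip n X)\<bar>"
    using assms by (simp add: abs_mult order.trans[OF abs_triangle_ineq])
  also have "\<dots> \<le> (1 + t) / 2 * M + (1 - t) / 2 * M"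
    using assms Suc.IH[of X] Suc.IH[of "flip n X"] by (intro add_mono mult_left_mono) auto
  also have "\<dots> = M" by (simp add: field_simps)
  finally show ?case using Suc.IH by simp
qed (use assms in simp)

lemma noise_op_1: "noise_op B 1 n f = f"
  by (induction n) auto

lemma noise_op_add: "noise_op B t n (\<lambda>X. f X + g X) = (\<lambda>X. noise_op B t n f X + noise_op B t n g X)"
  by (induction n) (auto simp: algebra_simps)

lemma noise_op_zero: "noise_op B t n (\<lambda>X. 0) = (\<lambda>X. 0)"
  by (induction n) auto

lemma noise_op_cmult:
  assumes "\<And>X i. i < n \<Longrightarrow> c (flip i X) = c X"
  shows "noise_op B t n (\<lambda>X. c X * f X) = (\<lambda>X. c X * noise_op B t n f X)"
  using assms by (induction n) (auto simp: algebra_simps)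

lemma noise_op_flip_beyond:
  assumes "\<And>X. h (flip j X) = h X" "n \<le> j"
  shows "noise_op B t n h (flip j X) = noise_op B t n h X"
  using assms(2)
proof (induction n arbitrary: X)
  case (Suc n)
  then show ?case by (simp add: flip_commute[of n j])
qed (use assms(1) in simp)

lemma has_real_derivative_noise_op_1:
  "((\<lambda>t. noise_op B t n f X) has_real_derivative (\<Sum>i\<in>B \<inter> {..<n}. (f X - f (flip i X)) / 2)) (at 1)"
proof (induction n arbitrary: X)
  case (Suc n)
  show ?case
  proof (cases "n \<in> B")
    case True
    define S where "S Y = (\<Sum>i\<in>B \<inter> {..<n}. (f Y - f (flip i Y)) / 2)" for Y
    have "DERIV (\<lambda>t::real. (1 + t) / 2) 1 :> 1 / 2" "DERIV (\<lambda>t::real. (1 - t) / 2) 1 :> - 1 / 2"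
      by (auto intro!: derivative_eq_intros)
    then have deriv: "((\<lambda>t. (1 + t) / 2 * noise_op B t n f X + (1 - t) / 2 * noise_op B t n f (flip n X))
        has_real_derivative
        (1 / 2 * noise_op B 1 n f X + S X * ((1 + 1) / 2)) +
        (- 1 / 2 * noise_op B 1 n f (flip n X) + S (flip n X) * ((1 - 1) / 2))) (at 1)"
      unfolding S_def by (intro DERIV_add DERIV_mult Suc.IH)
    have "B \<inter> {..<Suc n} = insert n (B \<inter> {..<n})" using True by auto
    then have "(1 / 2 * noise_op B 1 n f X + S X * ((1 + 1) / 2)) +
        (- 1 / 2 * noise_op B 1 n f (flip n X) + S (flip n X) * ((1 - 1) / 2))
        = (\<Sum>i\<in>B \<inter> {..<Suc n}. (f X - f (flip i X)) / 2)"
      by (simp add: S_def noise_op_1 diff_divide_distrib)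
    with deriv True show ?thesis by simp
  next
    case False
    then have "B \<inter> {..<Suc n} = B \<inter> {..<n}" by (auto simp: less_Suc_eq)
    then show ?thesis using Suc.IH False by simp
  qed
qed simp

text \<open>Along the noise line, a polynomial of degree \<open>k\<close> on the cube stays a polynomial of degree
\<open>k\<close> in \<open>t\<close>: each monomial \<open>\<chi>\<^sub>S\<close> is multiplied by \<open>t\<^sup>|\<^sup>S \<^sup>\<inter> \<^sup>B\<^sup>|\<close>.\<close>

lemma noise_op_eq_poly:
  fixes f :: "(nat \<Rightarrow> bool) \<Rightarrow> real"
  assumes "low_degree n k f"
  shows "\<exists>P. degree P \<le> nat k \<and> (\<forall>t. noise_op B t n f X = poly P t)"
  using assms
proof (induction n arbitrary: k f X)
  case 0
  then obtain c where "f = (\<lambda>_. c)" by auto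
  then show ?case by (intro exI[of _ "[:c:]"]) simp
next
  case (Suc n)
  obtain h0 h1 where h: "low_degree n k h0" "low_degree n (k - 1) h1"
    "f = (\<lambda>X. h0 X + bit_sign (X n) * h1 X)"
    using Suc.prems by (rule low_degree_SucE)
  obtain P0 where P0: "degree P0 \<le> nat k" "\<And>t. noise_op B t n h0 X = poly P0 t"
    using Suc.IH[OF h(1)] by blast
  obtain P1 where P1: "degree P1 \<le> nat (k - 1)" "\<And>t. noise_op B t n h1 X = poly P1 t"
    using Suc.IH[OF h(2)] by blast
  define c :: "real poly" where "c = (if n \<in> B then [:0, 1:] else 1)"
  have invariant: "noise_op B t n h (flip n X) = noise_op B t n h X" if "low_degree n l h" for t l h
    by (rule noise_op_flip_beyond) (auto intro: low_degree_flip_beyond[OF that])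
  have "noise_op B t n f = (\<lambda>X. noise_op B t n h0 X + bit_sign (X n) * noise_op B t n h1 X)" for t
    unfolding h(3) noise_op_add by (subst noise_op_cmult) auto
  then have noise_value: "noise_op B t (Suc n) f X =
      noise_op B t n h0 X + bit_sign (X n) * (poly c t * noise_op B t n h1 X)" for t
    using invariant[OF h(1), of t] invariant[OF h(2), of t]
    by (cases "X n") (simp_all add: c_def field_simps)
  show ?case
  proof (cases "k \<le> 0")
    case True
    then have "h1 = (\<lambda>_. 0)" using low_degree_negative[OF h(2)] by simp
    then show ?thesis using noise_value P0 by (intro exI[of _ P0]) (simp add: noise_op_zero)
  next
    case False
    have "degree (c * P1) \<le> nat k"
      using degree_mult_le[of c P1] P1(1) False by (auto simp: c_def)
    then have "degree (P0 + smult (bit_sign (X n)) (c * P1)) \<le> nat k"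
      using P0(1) by (intro order.trans[OF degree_add_le_max] max.boundedI
          order.trans[OF degree_smult_le]) auto
    then show ?thesis using noise_value P0 P1 by (intro exI[of _ "P0 + smult (bit_sign (X n)) (c * P1)"]) simp
  qed
qed

lemma abs_sum_half_diff_le:
  fixes f :: "(nat \<Rightarrow> bool) \<Rightarrow> real"
  assumes "low_degree n k f" "\<And>Y. \<bar>f Y\<bar> \<le> M"
  shows "\<bar>\<Sum>i\<in>B \<inter> {..<n}. (f X - f (flip i X)) / 2\<bar> \<le> M * real (nat k) * 6 ^ (nat k)"
proof -
  obtain P where P: "degree P \<le> nat k" "\<And>t. noise_op B t n f X = poly P t"
    using noise_op_eq_poly[OF assms(1)] by blast
  have "(\<Sum>i\<in>B \<inter> {..<n}. (f X - f (flip i X)) / 2) = poly (pderiv P) 1"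
    using has_real_derivative_noise_op_1[of B n f X] poly_DERIV[of P 1]
    unfolding P(2) by (rule DERIV_unique)
  also have "\<bar>\<dots>\<bar> \<le> M * real (nat k) * 6 ^ (nat k)"
  proof (rule abs_poly_pderiv_1_le[OF P(1)])
    fix t :: real assume "0 \<le> t" "t \<le> 1"
    then show "\<bar>poly P t\<bar> \<le> M" using abs_noise_op_le[of f M t B n X] assms(2) P(2) by simp
  qed
  finally show ?thesis .
qed

definition discrete_deriv :: "nat \<Rightarrow> ((nat \<Rightarrow> bool) \<Rightarrow> real) \<Rightarrow> (nat \<Rightarrow> bool) \<Rightarrow> real" where
  "discrete_deriv i f X = (f (X(i := False)) - f (X(i := True))) / 2"

lemma abs_discrete_deriv: "\<bar>discrete_deriv i f X\<bar> = \<bar>f X - f (flip i X)\<bar> / 2"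
  by (cases "X i") (simp_all add: discrete_deriv_def flip_def fun_upd_idem abs_minus_commute)

lemma low_degree_discrete_deriv: "low_degree n k f \<Longrightarrow> low_degree n k (discrete_deriv i f)"
proof -
  assume "low_degree n k f"
  then have "low_degree n k (\<lambda>X. (1 / 2) * (f (X(i := False)) - f (X(i := True))))"
    by (intro low_degree_cmult low_degree_diff low_degree_fun_upd)
  then show ?thesis unfolding discrete_deriv_def by (simp add: field_simps)
qed

text \<open>On the coordinates where \<open>f X - f (flip i X)\<close> has a fixed sign, the sum of the absolute
differences is the derivative of a noise line.\<close>

theorem sum_abs_discrete_deriv_le:
  fixes f :: "(nat \<Rightarrow> bool) \<Rightarrow> real"
  assumes "low_degree n k f" "\<And>Y. \<bar>f Y\<bar> \<le> M"
  shows "(\<Sum>i<n. \<bar>discrete_deriv i f X\<bar>) \<le> 2 * (M * real (nat k) * 6 ^ (nat k))"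
proof -
  define Bp where "Bp = {i. f (flip i X) \<le> f X}"
  define Bm where "Bm = - Bp"
  have "(\<Sum>i<n. \<bar>discrete_deriv i f X\<bar>) =
      (\<Sum>i\<in>Bp \<inter> {..<n}. \<bar>discrete_deriv i f X\<bar>) + (\<Sum>i\<in>Bm \<inter> {..<n}. \<bar>discrete_deriv i f X\<bar>)"
    unfolding Bm_def by (subst sum.union_disjoint[symmetric]) (auto intro: sum.cong)
  also have "(\<Sum>i\<in>Bp \<inter> {..<n}. \<bar>discrete_deriv i f X\<bar>) = (\<Sum>i\<in>Bp \<inter> {..<n}. (f X - f (flip i X)) / 2)"
    by (rule sum.cong) (auto simp: abs_discrete_deriv Bp_def)
  also have "(\<Sum>i\<in>Bm \<inter> {..<n}. \<bar>discrete_deriv i f X\<bar>) = - (\<Sum>i\<in>Bm \<inter> {..<n}. (f X - f (flip i X)) / 2)"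
    unfolding sum_negf[symmetric] by (rule sum.cong) (auto simp: abs_discrete_deriv Bm_def Bp_def abs_of_neg minus_divide_left)
  finally show ?thesis
    using abs_sum_half_diff_le[OF assms, where B = Bp and X = X]
      abs_sum_half_diff_le[OF assms, where B = Bm and X = X] by linarith
qed

section \<open>Approximation by a junta\<close>

lemma sum_power2_squared_le:
  fixes g :: "'x \<Rightarrow> real"
  shows "(\<Sum>i\<in>I. (g i)\<^sup>2)\<^sup>2 \<le> (\<Sum>i\<in>I. \<bar>g i\<bar>) * (\<Sum>i\<in>I. \<bar>g i\<bar> ^ 3)"
proof -
  have "(\<Sum>i\<in>I. sqrt \<bar>g i\<bar> * (sqrt \<bar>g i\<bar> * \<bar>g i\<bar>))\<^sup>2
      \<le> (\<Sum>i\<in>I. (sqrt \<bar>g i\<bar>)\<^sup>2) * (\<Sum>i\<in>I. (sqrt \<bar>g i\<bar> * \<bar>g i\<bar>)\<^sup>2)"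
    by (rule Cauchy_Schwarz_ineq_sum)
  moreover have "sqrt \<bar>g i\<bar> * (sqrt \<bar>g i\<bar> * \<bar>g i\<bar>) = (g i)\<^sup>2" for i
    by (simp only: mult.assoc[symmetric] real_sqrt_mult_self abs_abs abs_mult_self_eq power2_eq_square)
  moreover have "(sqrt \<bar>g i\<bar> * \<bar>g i\<bar>)\<^sup>2 = \<bar>g i\<bar> ^ 3" for i
    by (simp only: power_mult_distrib real_sqrt_pow2[OF abs_ge_zero]) (simp add: power2_eq_square power3_eq_cube)
  ultimately show ?thesis by simp
qed

lemma sum_abs_cube_squared_le:
  fixes g :: "'x \<Rightarrow> real"
  shows "(\<Sum>i\<in>I. \<bar>g i\<bar> ^ 3)\<^sup>2 \<le> (\<Sum>i\<in>I. (g i)\<^sup>2) * (\<Sum>i\<in>I. (g i) ^ 4)"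
proof -
  have "(\<Sum>i\<in>I. \<bar>g i\<bar> * (\<bar>g i\<bar> * \<bar>g i\<bar>))\<^sup>2 \<le> (\<Sum>i\<in>I. \<bar>g i\<bar>\<^sup>2) * (\<Sum>i\<in>I. (\<bar>g i\<bar> * \<bar>g i\<bar>)\<^sup>2)"
    by (rule Cauchy_Schwarz_ineq_sum)
  moreover have "\<bar>g i\<bar> * (\<bar>g i\<bar> * \<bar>g i\<bar>) = \<bar>g i\<bar> ^ 3" "(\<bar>g i\<bar> * \<bar>g i\<bar>)\<^sup>2 = (g i) ^ 4" for i
    by (simp_all add: power3_eq_cube power4_eq_xxxx power2_eq_square)
  ultimately show ?thesis by simp
qed

text \<open>A bound of the fourth moment by the square of the second turns into a bound of the
second moment by the square of the first: interpolate \<open>\<parallel>g\<parallel>\<^sub>2\<close> between \<open>\<parallel>g\<parallel>\<^sub>1\<close> and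
\<open>\<parallel>g\<parallel>\<^sub>4\<close> through \<open>\<parallel>g\<parallel>\<^sub>3\<close>.\<close>

lemma sum_power2_le_sum_abs_squared:
  fixes g :: "'x \<Rightarrow> real"
  assumes "0 < c" "0 \<le> M" and fourth: "c * (\<Sum>i\<in>I. (g i) ^ 4) \<le> M * (\<Sum>i\<in>I. (g i)\<^sup>2)\<^sup>2"
  shows "c * (\<Sum>i\<in>I. (g i)\<^sup>2) \<le> M * (\<Sum>i\<in>I. \<bar>g i\<bar>)\<^sup>2"
proof -
  define S1 where "S1 = (\<Sum>i\<in>I. \<bar>g i\<bar>)"
  define S2 where "S2 = (\<Sum>i\<in>I. (g i)\<^sup>2)"
  define S3 where "S3 = (\<Sum>i\<in>I. \<bar>g i\<bar> ^ 3)"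
  define S4 where "S4 = (\<Sum>i\<in>I. (g i) ^ 4)"
  have nonneg: "0 \<le> S1" "0 \<le> S2" "0 \<le> S4"
    unfolding S1_def S2_def S4_def by (simp_all add: sum_nonneg zero_le_even_power)
  show ?thesis
  proof (cases "S2 = 0")
    case True
    then show ?thesis using assms unfolding S2_def by simp
  next
    case False
    have "S2 ^ 4 = (S2\<^sup>2)\<^sup>2" by simp
    also have "\<dots> \<le> (S1 * S3)\<^sup>2"
      using sum_power2_squared_le[of g I] nonneg unfolding S1_def S2_def S3_def
      by (intro power_mono) auto
    also have "\<dots> = S1\<^sup>2 * S3\<^sup>2" by (simp add: power_mult_distrib)
    also have "\<dots> \<le> S1\<^sup>2 * (S2 * S4)"
      using sum_abs_cube_squared_le[of g I] unfolding S2_def S3_def S4_def by (intro mult_left_mono) auto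
    finally have "c * S2 ^ 4 \<le> S1\<^sup>2 * S2 * (c * S4)"
      using \<open>0 < c\<close> by (simp add: mult_ac)
    also have "\<dots> \<le> S1\<^sup>2 * S2 * (M * S2\<^sup>2)"
      using fourth nonneg unfolding S4_def S2_def by (intro mult_left_mono) auto
    finally have "(c * S2) * S2 ^ 3 \<le> (M * S1\<^sup>2) * S2 ^ 3"
      by (simp add: power2_eq_square power3_eq_cube power4_eq_xxxx mult_ac)
    then show ?thesis
      using False nonneg unfolding S1_def S2_def by (simp add: mult_le_cancel_right)
  qed
qed

lemma flip_in_inputs: "i < N \<Longrightarrow> X \<in> inputs N \<Longrightarrow> flip i X \<in> inputs N"
  by (auto simp: inputs_def flip_def)

lemma sum_inputs_flip: "i < N \<Longrightarrow> (\<Sum>X\<in>inputs N. \<phi> (flip i X)) = (\<Sum>X\<in>inputs N. \<phi> X)"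
  by (rule sum.reindex_bij_witness[of _ "flip i" "flip i"]) (auto simp: flip_in_inputs)

definition avg :: "nat \<Rightarrow> ((nat \<Rightarrow> bool) \<Rightarrow> real) \<Rightarrow> (nat \<Rightarrow> bool) \<Rightarrow> real" where
  "avg i f X = (f (X(i := False)) + f (X(i := True))) / 2"

lemma avg_eq_flip: "avg i f X = (f X + f (flip i X)) / 2"
  by (cases "X i") (simp_all add: avg_def flip_def fun_upd_idem)

lemma avg_flip: "avg i f (flip i X) = avg i f X"
  by (simp add: avg_def flip_def)

primrec avg_coords :: "nat list \<Rightarrow> ((nat \<Rightarrow> bool) \<Rightarrow> real) \<Rightarrow> (nat \<Rightarrow> bool) \<Rightarrow> real" where
  "avg_coords [] f = f"
| "avg_coords (i # is) f = avg i (avg_coords is f)"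

lemma avg_coords_cong:
  assumes "\<And>X Y. (\<forall>j\<in>U. X j = Y j) \<Longrightarrow> f X = f Y" "\<forall>j\<in>U - set ks. X j = Y j"
  shows "avg_coords ks f X = avg_coords ks f Y"
  using assms(2)
proof (induction ks arbitrary: X Y)
  case (Cons i "is")
  have "avg_coords is f (X(i := b)) = avg_coords is f (Y(i := b))" for b
    by (rule Cons.IH) (use Cons.prems in auto)
  then show ?case by (simp add: avg_def)
qed (use assms(1) in simp)

text \<open>The Efron--Stein inequality: averaging out the coordinates \<open>ks\<close> one at a time, each step
splits orthogonally into the part odd under \<open>flip i\<close>, which is \<open>D\<^sub>i f\<close>, and an average of the
previous error.\<close>

theorem efron_stein:
  assumes "\<forall>i\<in>set ks. i < N"
  shows "(\<Sum>X\<in>inputs N. (f X - avg_coords ks f X)\<^sup>2)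
    \<le> (\<Sum>i\<leftarrow>ks. (\<Sum>X\<in>inputs N. (discrete_deriv i f X)\<^sup>2))"
  using assms
proof (induction ks)
  case (Cons i "is")
  have iN: "i < N" using Cons.prems by simp
  define \<phi> where "\<phi> X = f X - avg_coords is f X" for X
  define u where "u X = f X - avg i f X" for X
  define v where "v X = avg i \<phi> X" for X
  have split: "f X - avg_coords (i # is) f X = u X + v X" for X
    by (simp add: u_def v_def \<phi>_def avg_def) (simp add: field_simps)
  have u_flip: "u (flip i X) = - u X" for X by (simp add: u_def avg_eq_flip) (simp add: field_simps)
  have v_flip: "v (flip i X) = v X" for X by (simp add: v_def avg_flip)
  have "(\<Sum>X\<in>inputs N. u X * v X) = (\<Sum>X\<in>inputs N. u (flip i X) * v (flip i X))"
    by (rule sum_inputs_flip[OF iN, symmetric])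
  also have "\<dots> = - (\<Sum>X\<in>inputs N. u X * v X)"
    by (simp add: u_flip v_flip sum_negf)
  finally have orthogonal: "(\<Sum>X\<in>inputs N. u X * v X) = 0" by simp
  have "\<bar>u X\<bar> = \<bar>discrete_deriv i f X\<bar>" for X
    by (simp add: u_def avg_eq_flip abs_discrete_deriv field_simps)
  then have u_sq: "(u X)\<^sup>2 = (discrete_deriv i f X)\<^sup>2" for X
    by (metis power2_abs)
  have "(v X)\<^sup>2 \<le> ((\<phi> X)\<^sup>2 + (\<phi> (flip i X))\<^sup>2) / 2" for X
  proof -
    have "(v X)\<^sup>2 = ((\<phi> X + \<phi> (flip i X)) / 2)\<^sup>2" by (simp add: v_def avg_eq_flip)
    also have "\<dots> \<le> ((\<phi> X)\<^sup>2 + (\<phi> (flip i X))\<^sup>2) / 2"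
      using sum_squares_ge_zero[of "\<phi> X - \<phi> (flip i X)" 0]
      by (simp add: power2_eq_square field_simps)
    finally show ?thesis .
  qed
  then have "(\<Sum>X\<in>inputs N. (v X)\<^sup>2) \<le> (\<Sum>X\<in>inputs N. ((\<phi> X)\<^sup>2 + (\<phi> (flip i X))\<^sup>2) / 2)"
    by (rule sum_mono)
  also have "\<dots> = ((\<Sum>X\<in>inputs N. (\<phi> X)\<^sup>2) + (\<Sum>X\<in>inputs N. (\<phi> (flip i X))\<^sup>2)) / 2"
    by (simp only: sum.distrib[symmetric] sum_divide_distrib)
  also have "\<dots> = (\<Sum>X\<in>inputs N. (\<phi> X)\<^sup>2)"
    using sum_inputs_flip[OF iN, of "\<lambda>X. (\<phi> X)\<^sup>2"] by simp
  finally have v_sq: "(\<Sum>X\<in>inputs N. (v X)\<^sup>2) \<le> (\<Sum>X\<in>inputs N. (\<phi> X)\<^sup>2)" .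
  have "(\<Sum>X\<in>inputs N. (f X - avg_coords (i # is) f X)\<^sup>2) = (\<Sum>X\<in>inputs N. (u X + v X)\<^sup>2)"
    by (simp only: split)
  also have "\<dots> = (\<Sum>X\<in>inputs N. (u X)\<^sup>2) + (\<Sum>X\<in>inputs N. (v X)\<^sup>2) + 2 * (\<Sum>X\<in>inputs N. u X * v X)"
    by (simp add: power2_sum sum.distrib sum_distrib_left mult.assoc)
  also have "\<dots> \<le> (\<Sum>X\<in>inputs N. (discrete_deriv i f X)\<^sup>2) + (\<Sum>X\<in>inputs N. (\<phi> X)\<^sup>2)"
    using v_sq by (simp add: orthogonal u_sq)
  also have "(\<Sum>X\<in>inputs N. (\<phi> X)\<^sup>2) \<le> (\<Sum>j\<leftarrow>is. (\<Sum>X\<in>inputs N. (discrete_deriv j f X)\<^sup>2))"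
    using Cons by (simp add: \<phi>_def)
  finally show ?case by simp
qed simp

text \<open>Unnormalised: the sum, not the average, over the \<open>2\<^sup>N\<close> inputs.\<close>

definition influence :: "nat \<Rightarrow> ((nat \<Rightarrow> bool) \<Rightarrow> real) \<Rightarrow> nat \<Rightarrow> real" where
  "influence N f i = (\<Sum>X\<in>inputs N. \<bar>discrete_deriv i f X\<bar>)"

lemma influence_nonneg: "0 \<le> influence N f i"
  by (simp add: influence_def sum_nonneg)

lemma sum_influence_le:
  assumes "low_degree N (int d) f" "\<And>Y. \<bar>f Y\<bar> \<le> 1"
  shows "(\<Sum>i<N. influence N f i) \<le> 2 ^ N * (2 * real d * 6 ^ d)"
proof -
  have "(\<Sum>i<N. influence N f i) = (\<Sum>X\<in>inputs N. \<Sum>i<N. \<bar>discrete_deriv i f X\<bar>)"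
    unfolding influence_def by (rule sum.swap)
  also have "\<dots> \<le> (\<Sum>X\<in>inputs N. 2 * real d * 6 ^ d)"
    using sum_abs_discrete_deriv_le[OF assms] by (intro sum_mono) (simp add: mult.assoc)
  finally show ?thesis by (simp add: card_inputs)
qed

lemma sum_power2_discrete_deriv_le:
  assumes "low_degree N (int d) f"
  shows "2 ^ N * (\<Sum>X\<in>inputs N. (discrete_deriv i f X)\<^sup>2) \<le> 9 ^ d * (influence N f i)\<^sup>2"
  unfolding influence_def
  using bonami[OF low_degree_discrete_deriv[OF assms, of i]]
  by (intro sum_power2_le_sum_abs_squared) auto

lemma card_threshold_le:
  fixes a :: "'i \<Rightarrow> real"
  assumes "finite I" "\<And>i. i \<in> I \<Longrightarrow> 0 \<le> a i" "0 < \<tau>"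
  shows "real (card {i \<in> I. \<tau> \<le> a i}) \<le> (\<Sum>i\<in>I. a i) / \<tau>"
proof -
  have "real (card {i \<in> I. \<tau> \<le> a i}) * \<tau> = (\<Sum>i\<in>{i \<in> I. \<tau> \<le> a i}. \<tau>)" by simp
  also have "\<dots> \<le> (\<Sum>i\<in>{i \<in> I. \<tau> \<le> a i}. a i)" by (rule sum_mono) simp
  also have "\<dots> \<le> (\<Sum>i\<in>I. a i)" using assms by (intro sum_mono2) auto
  finally show ?thesis using \<open>0 < \<tau>\<close> by (simp add: le_divide_eq)
qed

lemma card_close_ge:
  assumes "(\<Sum>X\<in>inputs N. (f X - g X)\<^sup>2) \<le> \<alpha>\<^sup>2 * \<delta> * 2 ^ N" "0 < \<alpha>"
  shows "(1 - \<delta>) * 2 ^ N \<le> real (card {X \<in> inputs N. \<bar>g X - f X\<bar> \<le> \<alpha>})"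
proof -
  define close where "close = {X \<in> inputs N. \<bar>g X - f X\<bar> \<le> \<alpha>}"
  define far where "far = {X \<in> inputs N. \<alpha>\<^sup>2 \<le> (f X - g X)\<^sup>2}"
  have "real (card far) \<le> (\<Sum>X\<in>inputs N. (f X - g X)\<^sup>2) / \<alpha>\<^sup>2"
    unfolding far_def using \<open>0 < \<alpha>\<close> by (intro card_threshold_le) (simp_all add: finite_inputs)
  also have "\<dots> \<le> \<alpha>\<^sup>2 * \<delta> * 2 ^ N / \<alpha>\<^sup>2" using assms(1) by (intro divide_right_mono) simp_all
  also have "\<dots> = \<delta> * 2 ^ N" using \<open>0 < \<alpha>\<close> by simp
  finally have card_far: "real (card far) \<le> \<delta> * 2 ^ N" .
  have "X \<in> far" if "X \<in> inputs N" "X \<notin> close" for X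
  proof -
    have "\<alpha> \<le> \<bar>f X - g X\<bar>" using that by (simp add: close_def abs_minus_commute)
    then have "\<alpha>\<^sup>2 \<le> \<bar>f X - g X\<bar>\<^sup>2" using \<open>0 < \<alpha>\<close> by (intro power_mono) auto
    then show ?thesis using that by (simp add: far_def)
  qed
  then have "inputs N \<subseteq> close \<union> far" by blast
  then have "card (inputs N) \<le> card (close \<union> far)"
    by (intro card_mono) (simp_all add: close_def far_def finite_inputs)
  also have "\<dots> \<le> card close + card far" by (rule card_Un_le)
  finally have "card (inputs N) \<le> card close + card far" .
  then have "real (2 ^ N) \<le> real (card close + card far)"
    unfolding card_inputs by (simp only: of_nat_le_iff)
  then show ?thesis using card_far by (simp add: close_def algebra_simps)
qed

lemma nonadaptive_alg_restrict:
  "J \<subseteq> {..<N} \<Longrightarrow> nonadaptive_alg N J (\<lambda>X. h (\<lambda>j. j \<in> J \<and> X j))"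
  unfolding nonadaptive_alg_def
proof (intro conjI allI impI)
  fix X Y :: "nat \<Rightarrow> bool" assume "\<forall>i\<in>J. X i = Y i"
  then have "(\<lambda>j. j \<in> J \<and> X j) = (\<lambda>j. j \<in> J \<and> Y j)" by auto
  then show "h (\<lambda>j. j \<in> J \<and> X j) = h (\<lambda>j. j \<in> J \<and> Y j)" by simp
qed

lemma efron_stein_low_influence:
  assumes f: "low_degree N (int d) f" and ks: "set ks \<subseteq> {..<N}" "distinct ks"
    and small: "\<And>i. i \<in> set ks \<Longrightarrow> influence N f i \<le> \<tau>" and "0 \<le> \<tau>"
  shows "(\<Sum>X\<in>inputs N. (f X - avg_coords ks f X)\<^sup>2) \<le> 9 ^ d * \<tau> / 2 ^ N * (\<Sum>i<N. influence N f i)"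
proof -
  have "(\<Sum>X\<in>inputs N. (discrete_deriv i f X)\<^sup>2) \<le> 9 ^ d * \<tau> / 2 ^ N * influence N f i"
    if "i \<in> set ks" for i
  proof -
    have "(influence N f i)\<^sup>2 \<le> \<tau> * influence N f i"
      using small[OF that] influence_nonneg[of N f i] by (simp add: power2_eq_square mult_right_mono)
    then have "9 ^ d * (influence N f i)\<^sup>2 \<le> 9 ^ d * (\<tau> * influence N f i)"
      by (rule mult_left_mono) simp
    then have "2 ^ N * (\<Sum>X\<in>inputs N. (discrete_deriv i f X)\<^sup>2) \<le> 9 ^ d * (\<tau> * influence N f i)"
      using sum_power2_discrete_deriv_le[OF f, of i] by linarith
    then show ?thesis by (simp add: field_simps mult_ac)
  qed
  then have "(\<Sum>i\<in>set ks. \<Sum>X\<in>inputs N. (discrete_deriv i f X)\<^sup>2)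
      \<le> (\<Sum>i<N. 9 ^ d * \<tau> / 2 ^ N * influence N f i)"
    using ks influence_nonneg \<open>0 \<le> \<tau>\<close>
    by (intro order.trans[OF sum_mono sum_mono2]) auto
  then show ?thesis
    using efron_stein[of ks N f] ks by (simp add: sum_list_distinct_conv_sum_set subset_eq sum_distrib_left)
qed

definition junta_size :: "nat \<Rightarrow> real" where
  "junta_size d = 9 ^ d * (2 * real d * 6 ^ d) * (2 * real d * 6 ^ d + 1)"

text \<open>Query the coordinates of influence at least \<open>\<tau>\<close> and average over all others; \<open>\<tau>\<close> is
chosen so that the Efron--Stein error is at most \<open>\<alpha>\<^sup>2\<delta>\<close> on average.\<close>

theorem junta_approximation:
  assumes f: "low_degree N (int d) f" "\<And>Y. \<bar>f Y\<bar> \<le> 1" and "0 < \<alpha>" "0 < \<delta>"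
  shows "\<exists>S g. nonadaptive_alg N S g \<and> real (card S) \<le> junta_size d / (\<alpha>\<^sup>2 * \<delta>) \<and>
    (1 - \<delta>) * 2 ^ N \<le> real (card {X \<in> inputs N. \<bar>g X - f X\<bar> \<le> \<alpha>})"
proof -
  define L where "L = 2 * real d * 6 ^ d"
  define \<tau> where "\<tau> = \<alpha>\<^sup>2 * \<delta> * 2 ^ N / (9 ^ d * (L + 1))"
  define J where "J = {i \<in> {..<N}. \<tau> \<le> influence N f i}"
  define ks where "ks = filter (\<lambda>i. i \<notin> J) [0..<N]"
  define g where "g X = avg_coords ks f (\<lambda>j. j \<in> J \<and> X j)" for X
  have L: "0 \<le> L" by (simp add: L_def)
  then have \<tau>: "0 < \<tau>" unfolding \<tau>_def using \<open>0 < \<alpha>\<close> \<open>0 < \<delta>\<close> by (intro divide_pos_pos) auto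
  have total: "(\<Sum>i<N. influence N f i) \<le> 2 ^ N * L"
    unfolding L_def by (rule sum_influence_le[OF f])
  have "real (card J) \<le> (\<Sum>i<N. influence N f i) / \<tau>"
    unfolding J_def using \<tau> by (intro card_threshold_le) (simp_all add: influence_nonneg)
  also have "\<dots> \<le> 2 ^ N * L / \<tau>" using total \<tau> by (intro divide_right_mono) simp_all
  also have "\<dots> = junta_size d / (\<alpha>\<^sup>2 * \<delta>)"
    unfolding \<tau>_def junta_size_def L_def[symmetric] using \<open>0 < \<alpha>\<close> \<open>0 < \<delta>\<close> by simp
  finally have card_J: "real (card J) \<le> junta_size d / (\<alpha>\<^sup>2 * \<delta>)" .
  have "g X = avg_coords ks f X" for X
    unfolding g_def by (rule avg_coords_cong[where U = "{..<N}"]) (auto intro: low_degree_cong[OF f(1)] simp: ks_def)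
  then have "(\<Sum>X\<in>inputs N. (f X - g X)\<^sup>2) = (\<Sum>X\<in>inputs N. (f X - avg_coords ks f X)\<^sup>2)" by simp
  also have "\<dots> \<le> 9 ^ d * \<tau> / 2 ^ N * (\<Sum>i<N. influence N f i)"
    using \<tau> by (intro efron_stein_low_influence[OF f(1)]) (auto simp: ks_def J_def)
  also have "\<dots> \<le> 9 ^ d * \<tau> / 2 ^ N * (2 ^ N * L)"
    using \<tau> total by (intro mult_left_mono) simp_all
  also have "\<dots> = \<alpha>\<^sup>2 * \<delta> * 2 ^ N * (L / (L + 1))" using L by (simp add: \<tau>_def)
  also have "\<dots> \<le> \<alpha>\<^sup>2 * \<delta> * 2 ^ N * 1" using L \<open>0 < \<delta>\<close> by (intro mult_left_mono) simp_all
  finally have "(\<Sum>X\<in>inputs N. (f X - g X)\<^sup>2) \<le> \<alpha>\<^sup>2 * \<delta> * 2 ^ N" by simp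
  moreover have "nonadaptive_alg N J g"
    unfolding g_def by (rule nonadaptive_alg_restrict) (auto simp: J_def)
  ultimately show ?thesis
    using card_close_ge[OF _ \<open>0 < \<alpha>\<close>] card_J by blast
qed

lemma junta_approximation_fourth_powers:
  assumes f: "low_degree N (int d) f" "\<And>Y. 0 \<le> f Y \<and> f Y \<le> 1" and "0 < \<alpha>" "0 < \<delta>"
  shows "\<exists>S g. nonadaptive_alg N S g \<and> real (card S) \<le> junta_size d / (\<alpha> ^ 4 * \<delta> ^ 4) \<and>
    (1 - \<delta>) * 2 ^ N \<le> real (card {X \<in> inputs N. \<bar>g X - f X\<bar> \<le> \<alpha>})"
proof -
  have size: "0 \<le> junta_size d / (\<alpha> ^ 4 * \<delta> ^ 4)" by (simp add: junta_size_def)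
  have trivial_alg: "nonadaptive_alg N {} (\<lambda>_. c)" for c by (simp add: nonadaptive_alg_def)
  consider "1 \<le> \<delta>" | "1 \<le> \<alpha>" | "\<alpha> < 1" "\<delta> < 1" by linarith
  then show ?thesis
  proof cases
    case 1
    then have "(1 - \<delta>) * 2 ^ N \<le> 0" by (simp add: mult_nonpos_nonneg)
    then show ?thesis using trivial_alg[of 0] size by (intro exI[of _ "{}"] exI[of _ "\<lambda>_. 0"]) auto
  next
    case 2
    then have "\<bar>1 / 2 - f X\<bar> \<le> \<alpha>" for X using f(2)[of X] by (simp add: abs_le_iff)
    then have "{X \<in> inputs N. \<bar>1 / 2 - f X\<bar> \<le> \<alpha>} = inputs N" by blast
    then show ?thesis using trivial_alg[of "1 / 2"] size \<open>0 < \<delta>\<close>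
      by (intro exI[of _ "{}"] exI[of _ "\<lambda>_. 1 / 2"]) (simp add: card_inputs)
  next
    case 3
    have "\<bar>f Y\<bar> \<le> 1" for Y using f(2)[of Y] by simp
    then obtain S g where Sg: "nonadaptive_alg N S g" "real (card S) \<le> junta_size d / (\<alpha>\<^sup>2 * \<delta>)"
      "(1 - \<delta>) * 2 ^ N \<le> real (card {X \<in> inputs N. \<bar>g X - f X\<bar> \<le> \<alpha>})"
      using junta_approximation[OF f(1) _ \<open>0 < \<alpha>\<close> \<open>0 < \<delta>\<close>] by blast
    have "\<alpha> ^ 4 \<le> \<alpha>\<^sup>2" "\<delta> ^ 4 \<le> \<delta> ^ 1"
      using 3 \<open>0 < \<alpha>\<close> \<open>0 < \<delta>\<close> by (intro power_decreasing; simp)+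
    then have "\<alpha> ^ 4 * \<delta> ^ 4 \<le> \<alpha>\<^sup>2 * \<delta>" by (intro mult_mono) simp_all
    then have "junta_size d / (\<alpha>\<^sup>2 * \<delta>) \<le> junta_size d / (\<alpha> ^ 4 * \<delta> ^ 4)"
      using \<open>0 < \<alpha>\<close> \<open>0 < \<delta>\<close> by (intro divide_left_mono) (simp_all add: junta_size_def)
    then show ?thesis using Sg by fastforce
  qed
qed

lemma junta_size_le: "junta_size (2 * T) \<le> 2 ^ (25 * T)"
proof (cases "T = 0")
  case False
  have "2 * real (2 * T) * 6 ^ (2 * T) = 4 * (real T * 36 ^ T)" by (simp add: power_mult)
  also have "\<dots> \<le> 4 * (2 ^ T * 36 ^ T)"
    using of_nat_less_two_power[of T] by (intro mult_left_mono mult_right_mono) simp_all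
  also have "\<dots> = 4 * 72 ^ T" by (simp add: power_mult_distrib[symmetric])
  finally have L: "2 * real (2 * T) * 6 ^ (2 * T) \<le> 4 * 72 ^ T" .
  then have L1: "2 * real (2 * T) * 6 ^ (2 * T) + 1 \<le> 5 * 72 ^ T"
    using one_le_power[of "72 :: real" T] by linarith
  have "9 ^ (2 * T) * (2 * real (2 * T) * 6 ^ (2 * T)) \<le> 81 ^ T * (4 * 72 ^ T)"
    using L by (simp add: power_mult)
  then have "junta_size (2 * T) \<le> 81 ^ T * (4 * 72 ^ T) * (5 * 72 ^ T)"
    unfolding junta_size_def using L1 by (rule mult_mono) simp_all
  also have "\<dots> = 20 * (81 * 72 * 72) ^ T" unfolding power_mult_distrib by (simp only: mult_ac)
  also have "\<dots> \<le> 20 ^ T * (81 * 72 * 72) ^ T"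
    using False by (intro mult_right_mono) (simp_all add: self_le_power)
  also have "\<dots> \<le> 33554432 ^ T" by (simp add: power_mult_distrib[symmetric] power_mono)
  also have "\<dots> = 2 ^ (25 * T)" by (simp add: power_mult)
  finally show ?thesis .
qed (simp add: junta_size_def)

section \<open>Quantum query algorithms\<close>

lemma sum_cmod_power2_mat_apply:
  assumes "is_unitary D V"
  shows "(\<Sum>j<D. (cmod (mat_apply D V v j))\<^sup>2) = (\<Sum>k<D. (cmod (v k))\<^sup>2)"
proof -
  have "complex_of_real (\<Sum>j<D. (cmod (mat_apply D V v j))\<^sup>2)
      = (\<Sum>j<D. (\<Sum>k<D. V j k * v k) * (\<Sum>l<D. cnj (V j l) * cnj (v l)))"
    by (simp only: of_real_sum complex_norm_square mat_apply_def cnj_sum complex_cnj_mult)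
  also have "\<dots> = (\<Sum>j<D. \<Sum>k<D. \<Sum>l<D. (V j k * v k) * (cnj (V j l) * cnj (v l)))"
    by (simp add: sum_product)
  also have "\<dots> = (\<Sum>k<D. \<Sum>l<D. \<Sum>j<D. (V j k * v k) * (cnj (V j l) * cnj (v l)))"
    by (subst sum.swap) (rule sum.cong[OF refl], rule sum.swap)
  also have "\<dots> = (\<Sum>k<D. \<Sum>l<D. v k * cnj (v l) * (\<Sum>j<D. cnj (V j l) * V j k))"
    by (simp add: sum_distrib_left mult_ac)
  also have "\<dots> = (\<Sum>k<D. \<Sum>l<D. if l = k then v k * cnj (v l) else 0)"
    using assms unfolding is_unitary_def by (intro sum.cong refl) auto
  also have "\<dots> = (\<Sum>k<D. v k * cnj (v k))" by simp
  also have "\<dots> = complex_of_real (\<Sum>k<D. (cmod (v k))\<^sup>2)"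
    by (simp only: of_real_sum complex_norm_square)
  finally show ?thesis by (simp only: of_real_eq_iff)
qed

definition query_phase :: "nat \<Rightarrow> nat \<Rightarrow> (nat \<Rightarrow> bool) \<Rightarrow> complex" where
  "query_phase N l X = (if l mod (N + 1) = 0 then 1 else bit_sign (X (l mod (N + 1) - 1)))"

lemma phase_query_eq: "phase_query N X v l = query_phase N l X * v l"
  by (simp add: phase_query_def query_phase_def bit_sign_def)

lemma cmod_query_phase: "cmod (query_phase N l X) = 1"
  by (simp add: query_phase_def bit_sign_def)

lemma sum_cmod_power2_phase_query:
  "(\<Sum>k<D. (cmod (phase_query N X v k))\<^sup>2) = (\<Sum>k<D. (cmod (v k))\<^sup>2)"
  by (simp add: phase_query_eq norm_mult cmod_query_phase)

lemma low_degree_query_phase: "low_degree N 1 (query_phase N l)"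
proof (cases "l mod (N + 1) = 0")
  case True
  then have "query_phase N l = (\<lambda>_. 1)" by (auto simp: query_phase_def)
  then show ?thesis using low_degree_const[of 1 N "1::complex"] by simp
next
  case False
  have "l mod (N + 1) < N + 1" by simp
  then have "l mod (N + 1) - 1 < N" using False by linarith
  moreover have "query_phase N l = (\<lambda>X. bit_sign (X (l mod (N + 1) - 1)))"
    using False by (auto simp: query_phase_def)
  ultimately show ?thesis using low_degree_bit_sign by simp
qed

text \<open>Each amplitude after \<open>t\<close> queries has degree at most \<open>t\<close>: every query multiplies by a
phase of degree 1, and unitaries take linear combinations.\<close>

lemma low_degree_qstate: "low_degree N (int t) (\<lambda>X. qstate N m U X t k)"
proof (induction t arbitrary: k)
  case 0
  show ?case by (simp add: low_degree_const)
next
  case (Suc t)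
  have "low_degree N (1 + int t) (\<lambda>X. query_phase N l X * qstate N m U X t l)" for l
    by (rule low_degree_mult[OF low_degree_query_phase Suc.IH])
  then have "low_degree N (int (Suc t))
      (\<lambda>X. \<Sum>l<(N + 1) * m. U (Suc t) k l * (query_phase N l X * qstate N m U X t l))"
    by (intro low_degree_sum low_degree_cmult) (simp_all add: add.commute)
  then show ?case by (simp add: mat_apply_def phase_query_eq)
qed

lemma low_degree_acc_prob:
  assumes "finite Acc"
  shows "low_degree N (int (2 * T)) (acc_prob N m U Acc T)"
proof -
  have "low_degree N (int T + int T) (\<lambda>X. \<Sum>k\<in>Acc. qstate N m U X T k * cnj (qstate N m U X T k))"
    using assms by (intro low_degree_sum low_degree_mult low_degree_qstate low_degree_cnj)
  then have "low_degree N (int (2 * T)) (\<lambda>X. Re (\<Sum>k\<in>Acc. qstate N m U X T k * cnj (qstate N m U X T k)))"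
    by (intro low_degree_Re) simp
  moreover have "Re (\<Sum>k\<in>Acc. qstate N m U X T k * cnj (qstate N m U X T k)) = acc_prob N m U Acc T X" for X
    unfolding acc_prob_def by (simp only: complex_norm_square[symmetric] Re_sum Re_complex_of_real)
  ultimately show ?thesis by simp
qed

lemma sum_cmod_power2_qstate:
  assumes "quantum_query_alg N m U Acc T" "t \<le> T"
  shows "(\<Sum>k<(N + 1) * m. (cmod (qstate N m U X t k))\<^sup>2) = 1"
  using assms(2)
proof (induction t)
  case 0
  have "is_unitary ((N + 1) * m) (U 0)" "0 < (N + 1) * m"
    using assms(1) by (simp_all add: quantum_query_alg_def)
  then have "(\<Sum>k<(N + 1) * m. (cmod (qstate N m U X 0 k))\<^sup>2)
      = (\<Sum>k<(N + 1) * m. (cmod (if k = 0 then 1 else 0 :: complex))\<^sup>2)"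
    by (simp add: sum_cmod_power2_mat_apply)
  also have "\<dots> = (\<Sum>k<(N + 1) * m. if k = 0 then 1 else 0)" by (rule sum.cong) auto
  also have "\<dots> = 1" using \<open>0 < (N + 1) * m\<close> by (simp add: sum.delta')
  finally show ?case .
next
  case (Suc t)
  then have "is_unitary ((N + 1) * m) (U (Suc t))"
    using assms(1) by (simp add: quantum_query_alg_def)
  then show ?case using Suc by (simp add: sum_cmod_power2_mat_apply sum_cmod_power2_phase_query)
qed

lemma acc_prob_bounds:
  assumes "quantum_query_alg N m U Acc T"
  shows "0 \<le> acc_prob N m U Acc T X \<and> acc_prob N m U Acc T X \<le> 1"
proof
  show "0 \<le> acc_prob N m U Acc T X" by (simp add: acc_prob_def sum_nonneg)
  have "acc_prob N m U Acc T X \<le> (\<Sum>k<(N + 1) * m. (cmod (qstate N m U X T k))\<^sup>2)"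
    using assms unfolding acc_prob_def quantum_query_alg_def by (intro sum_mono2) auto
  then show "acc_prob N m U Acc T X \<le> 1" using sum_cmod_power2_qstate[OF assms order.refl] by simp
qed

theorem corollary24:
  shows "\<exists>C::real. C > 0 \<and>
    (\<forall>N m U Acc T (\<alpha>::real) (\<delta>::real).
       quantum_query_alg N m U Acc T \<and> \<alpha> > 0 \<and> \<delta> > 0 \<longrightarrow>
       (\<exists>S g. nonadaptive_alg N S g \<and>
              real (card S) \<le> 2 powr (C * real T) / (\<alpha> ^ 4 * \<delta> ^ 4) \<and>
              real (card {X \<in> inputs N. \<bar>g X - acc_prob N m U Acc T X\<bar> \<le> \<alpha>})
                \<ge> (1 - \<delta>) * 2 ^ N))"
proof (intro exI[of _ 25] conjI allI impI)
  fix N m U Acc T and \<alpha> \<delta> :: real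
  assume "quantum_query_alg N m U Acc T \<and> \<alpha> > 0 \<and> \<delta> > 0"
  then have Q: "quantum_query_alg N m U Acc T" and "0 < \<alpha>" "0 < \<delta>" by auto
  have "finite Acc" using Q finite_subset by (auto simp: quantum_query_alg_def)
  then obtain S g where Sg: "nonadaptive_alg N S g"
      "real (card S) \<le> junta_size (2 * T) / (\<alpha> ^ 4 * \<delta> ^ 4)"
      "(1 - \<delta>) * 2 ^ N \<le> real (card {X \<in> inputs N. \<bar>g X - acc_prob N m U Acc T X\<bar> \<le> \<alpha>})"
    using junta_approximation_fourth_powers[OF low_degree_acc_prob acc_prob_bounds[OF Q]
        \<open>0 < \<alpha>\<close> \<open>0 < \<delta>\<close>] by blast
  have "junta_size (2 * T) / (\<alpha> ^ 4 * \<delta> ^ 4) \<le> 2 ^ (25 * T) / (\<alpha> ^ 4 * \<delta> ^ 4)"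
    by (intro divide_right_mono junta_size_le) simp
  also have "(2::real) ^ (25 * T) = 2 powr (25 * real T)" by (simp add: powr_realpow[symmetric])
  finally have "real (card S) \<le> 2 powr (25 * real T) / (\<alpha> ^ 4 * \<delta> ^ 4)" using Sg(2) by linarith
  with Sg(1,3) show "\<exists>S g. nonadaptive_alg N S g \<and>
      real (card S) \<le> 2 powr (25 * real T) / (\<alpha> ^ 4 * \<delta> ^ 4) \<and>
      real (card {X \<in> inputs N. \<bar>g X - acc_prob N m U Acc T X\<bar> \<le> \<alpha>}) \<ge> (1 - \<delta>) * 2 ^ N"
    by blast
qed simp

end
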